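(* Let $m\ge1$, let $k_1,k_2\ge1$ be integers and $r_1,r_2>0$ with $r_1^2+r_2^2=1$. Let $F_1:\mathbb{R}^{m+1}\to\mathbb{R}^{n_1+1}$ and $F_2:\mathbb{R}^{m+1}\to\mathbb{R}^{n_2+1}$ be forms of degrees $k_1$, $k_2$ with $|F_i(\bar x)|^2=r_i^2|\bar x|^{2k_i}$, each of minimal degree in its class, whose restrictions $\varphi_1:\mathbb{S}^m\to\mathbb{S}^{n_1}(r_1)$ and $\varphi_2:\mathbb{S}^m\to\mathbb{S}^{n_2}(r_2)$ are harmonic. Let $\varphi=\iota\circ(\varphi_1,\varphi_2):\mathbb{S}^m\to\mathbb{S}^{n_1+n_2+1}$, where $\iota$ is the canonical inclusion of $\mathbb{S}^{n_1}(r_1)\times\mathbb{S}^{n_2}(r_2)$ into $\mathbb{S}^{n_1+n_2+1}$. Then $\varphi$ is harmonic if and only if $k_1=k_2$.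
   Context: A form of degree $k$ is a map all of whose components are homogeneous polynomials of degree $k$. A form $F$ of degree $k$ is of minimal degree in its class if there is no form $G$ of degree strictly smaller than $k$ with $G|_{\mathbb{S}^m}=F|_{\mathbb{S}^m}$. $\mathbb{S}^n(r)$ is the sphere of radius $r$ centred at $0$, $\mathbb{S}^m$ the unit sphere. Harmonic means vanishing tension field. *)

theory Defs
  imports "HOL-Analysis.Analysis"
begin

definition monomials :: "nat \<Rightarrow> ('a::euclidean_space \<Rightarrow> nat) set" where
  "monomials k = {\<alpha>. (\<forall>b. b \<notin> Basis \<longrightarrow> \<alpha> b = 0) \<and> (\<Sum>b\<in>Basis. \<alpha> b) = k}"

definition monomial :: "('a::euclidean_space \<Rightarrow> nat) \<Rightarrow> 'a \<Rightarrow> real" where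
  "monomial \<alpha> x = (\<Prod>b\<in>Basis. (x \<bullet> b) ^ (\<alpha> b))"

definition homogeneous_poly :: "nat \<Rightarrow> ('a::euclidean_space \<Rightarrow> real) \<Rightarrow> bool" where
  "homogeneous_poly k p \<longleftrightarrow>
     (\<exists>c. \<forall>x. p x = (\<Sum>\<alpha>\<in>monomials k. c \<alpha> * monomial \<alpha> x))"

definition is_form :: "nat \<Rightarrow> ('a::euclidean_space \<Rightarrow> 'b::euclidean_space) \<Rightarrow> bool" where
  "is_form k F \<longleftrightarrow> (\<forall>b\<in>Basis. homogeneous_poly k (\<lambda>x. F x \<bullet> b))"

definition minimal_degree_form :: "nat \<Rightarrow> ('a::euclidean_space \<Rightarrow> 'b::euclidean_space) \<Rightarrow> bool" where
  "minimal_degree_form k F \<longleftrightarrow> is_form k F \<and>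
     \<not> (\<exists>j<k. \<exists>G :: 'a \<Rightarrow> 'b. is_form j G \<and> (\<forall>x\<in>sphere 0 1. G x = F x))"

definition tangent_onb :: "'a::euclidean_space \<Rightarrow> 'a set \<Rightarrow> bool" where
  "tangent_onb x B \<longleftrightarrow> finite B \<and> pairwise orthogonal B \<and> (\<forall>v\<in>B. norm v = 1)
      \<and> span B = {v. v \<bullet> x = 0}"

text \<open>Second covariant derivative of f at x in direction e (e a unit tangent vector):
  second derivative of f along the unit-speed great circle (geodesic) through x with velocity e.\<close>
definition geodesic_second_deriv ::
    "('a::euclidean_space \<Rightarrow> 'b::real_normed_vector) \<Rightarrow> 'a \<Rightarrow> 'a \<Rightarrow> 'b" where
  "geodesic_second_deriv f x e =
     vector_derivative
       (\<lambda>s. vector_derivative (\<lambda>t. f (cos t *\<^sub>R x + sin t *\<^sub>R e)) (at s)) (at 0)"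

text \<open>Laplace--Beltrami operator of the round unit sphere (trace of the Hessian),
  applied componentwise to a vector-valued map; only values of f on the sphere matter.\<close>
definition sphere_laplacian ::
    "('a::euclidean_space \<Rightarrow> 'b::real_normed_vector) \<Rightarrow> 'a \<Rightarrow> 'b" where
  "sphere_laplacian f x = (\<Sum>e\<in>(SOME B. tangent_onb x B). geodesic_second_deriv f x e)"

text \<open>Tension field of a map from the unit sphere into the sphere of radius r of a
  Euclidean space (isometrically embedded): tangential part of the Laplacian.\<close>
definition tension_field ::
    "('a::euclidean_space \<Rightarrow> 'b::euclidean_space) \<Rightarrow> 'a \<Rightarrow> 'b" where
  "tension_field f x = (let v = sphere_laplacian f x; y = f x in v - ((v \<bullet> y) / (y \<bullet> y)) *\<^sub>R y)"

definition harmonic_sphere_map ::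
    "real \<Rightarrow> ('a::euclidean_space \<Rightarrow> 'b::euclidean_space) \<Rightarrow> bool" where
  "harmonic_sphere_map r f \<longleftrightarrow>
     (\<forall>x\<in>sphere 0 1. f x \<in> sphere 0 r) \<and> (\<forall>x\<in>sphere 0 1. tension_field f x = 0)"

end

theory Submission
  imports Defs "HOL-Computational_Algebra.Polynomial_Factorial"
begin

(* Let m = DIM('a) - 1. For a form F of degree k, the second derivative of F along the great
   circle through x with velocity e is D^2F(x)(e,e) - DF(x)(x). Summing over an orthonormal frame
   of the tangent space and using Euler's identities DF(x)(x) = k F(x), D^2F(x)(x,x) = k(k-1) F(x)
   gives, on the sphere, Lap_S F = Lap F - k(k+m-1) F, where Lap F is a form of degree k - 2.
   Harmonicity of the restriction of F makes Lap F parallel to F on the sphere. If Lap F . F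
   were not identically zero, the homogenised identity |x|^(2k) Lap F = (Lap F . F) F, restricted
   to lines and combined with the irreducibility of t^2 + q (q > 0), would make every component
   of F divisible by |x|^2, against the minimality of k. Hence Lap F = 0 on the sphere and
   Lap_S F_i = -l_i F_i with l_i = k_i(k_i+m-1). The tension field of (F_1, F_2) is then
   ((l_2 - l_1) r_2^2 F_1, (l_1 - l_2) r_1^2 F_2), which vanishes iff l_1 = l_2 iff k_1 = k_2. *)

section \<open>Homogeneous polynomials\<close>

lemma finite_monomials: "finite (monomials k :: ('a::euclidean_space \<Rightarrow> nat) set)"
proof (rule finite_subset)
  show "monomials k \<subseteq> {\<alpha>::'a \<Rightarrow> nat. \<forall>b. (b \<in> Basis \<longrightarrow> \<alpha> b \<in> {0..k}) \<and> (b \<notin> Basis \<longrightarrow> \<alpha> b = 0)}"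
    unfolding monomials_def using member_le_sum[of _ Basis] by fastforce
  show "finite {\<alpha>::'a \<Rightarrow> nat. \<forall>b. (b \<in> Basis \<longrightarrow> \<alpha> b \<in> {0..k}) \<and> (b \<notin> Basis \<longrightarrow> \<alpha> b = 0)}"
    by (rule finite_set_of_finite_funs) auto
qed

lemma monomials_degree: "\<alpha> \<in> monomials k \<Longrightarrow> (\<Sum>b\<in>Basis. \<alpha> b) = k"
  unfolding monomials_def by simp

lemma sum_Basis_fun_upd:
  assumes "b \<in> (Basis :: 'a::euclidean_space set)"
  shows "(\<Sum>j\<in>Basis. (\<alpha>(b := n)) j) + \<alpha> b = (\<Sum>j\<in>Basis. \<alpha> j) + n"
  using assms by (simp add: sum.remove[of Basis b] sum.cong[of "Basis - {b}" _ "\<alpha>(b := n)" \<alpha>] add_ac)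

lemma monomials_fun_upd:
  assumes "\<alpha> \<in> monomials k" "b \<in> Basis" "k + n = j + \<alpha> b"
  shows "\<alpha>(b := n) \<in> monomials j"
  using assms sum_Basis_fun_upd[OF assms(2), of \<alpha> n] unfolding monomials_def by auto

lemma monomial_fun_upd:
  assumes "b \<in> (Basis :: 'a::euclidean_space set)"
  shows "monomial (\<alpha>(b := n)) x = (x \<bullet> b) ^ n * (\<Prod>j\<in>Basis - {b}. (x \<bullet> j) ^ \<alpha> j)"
  using assms unfolding monomial_def
  by (simp add: prod.remove[of Basis b] prod.cong[of "Basis - {b}" _ "\<lambda>j. (x \<bullet> j) ^ (\<alpha>(b := n)) j"])

lemma monomial_split:
  assumes "b \<in> (Basis :: 'a::euclidean_space set)"
  shows "monomial \<alpha> x = (x \<bullet> b) ^ \<alpha> b * (\<Prod>j\<in>Basis - {b}. (x \<bullet> j) ^ \<alpha> j)"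
  using monomial_fun_upd[OF assms, of \<alpha> "\<alpha> b"] by simp

lemma monomial_scaleR: "monomial \<alpha> (t *\<^sub>R x) = t ^ (\<Sum>b\<in>Basis. \<alpha> b) * monomial \<alpha> x"
  unfolding monomial_def by (simp add: power_mult_distrib prod.distrib power_sum)

definition hpoly :: "nat \<Rightarrow> (('a::euclidean_space \<Rightarrow> nat) \<Rightarrow> real) \<Rightarrow> 'a \<Rightarrow> real" where
  "hpoly k c x = (\<Sum>\<alpha>\<in>monomials k. c \<alpha> * monomial \<alpha> x)"

lemma homogeneous_poly_iff_hpoly: "homogeneous_poly k f \<longleftrightarrow> (\<exists>c. f = hpoly k c)"
  unfolding homogeneous_poly_def hpoly_def by (simp add: fun_eq_iff)

lemma homogeneous_poly_zero: "homogeneous_poly k (\<lambda>x. 0)"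
  unfolding homogeneous_poly_def by (rule exI[of _ "\<lambda>_. 0"]) simp

lemma homogeneous_poly_add:
  assumes "homogeneous_poly k f" "homogeneous_poly k g"
  shows "homogeneous_poly k (\<lambda>x. f x + g x)"
proof -
  from assms obtain c d where "f = hpoly k c" "g = hpoly k d"
    unfolding homogeneous_poly_iff_hpoly by blast
  then show ?thesis unfolding homogeneous_poly_iff_hpoly
    by (intro exI[of _ "\<lambda>\<alpha>. c \<alpha> + d \<alpha>"]) (simp add: hpoly_def fun_eq_iff sum.distrib algebra_simps)
qed

lemma homogeneous_poly_cmult:
  assumes "homogeneous_poly k f"
  shows "homogeneous_poly k (\<lambda>x. a * f x)"
proof -
  from assms obtain c where "f = hpoly k c"
    unfolding homogeneous_poly_iff_hpoly by blast
  then show ?thesis unfolding homogeneous_poly_iff_hpoly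
    by (intro exI[of _ "\<lambda>\<alpha>. a * c \<alpha>"]) (simp add: hpoly_def fun_eq_iff sum_distrib_left mult.assoc)
qed

lemma homogeneous_poly_sum:
  "finite I \<Longrightarrow> (\<And>i. i \<in> I \<Longrightarrow> homogeneous_poly k (f i)) \<Longrightarrow>
    homogeneous_poly k (\<lambda>x. \<Sum>i\<in>I. f i x)"
  by (induction I rule: finite_induct) (simp_all add: homogeneous_poly_zero homogeneous_poly_add)

lemma homogeneous_poly_hpoly: "homogeneous_poly k (hpoly k c)"
  unfolding homogeneous_poly_iff_hpoly by blast

lemma homogeneous_poly_monomial:
  assumes "\<alpha> \<in> monomials k"
  shows "homogeneous_poly k (monomial \<alpha>)"
proof -
  have "monomial \<alpha> x = hpoly k (\<lambda>\<beta>. if \<beta> = \<alpha> then 1 else 0) x" for x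
    using assms by (simp add: hpoly_def finite_monomials if_distrib[of "\<lambda>c. c * _"] cong: if_cong)
  then have "monomial \<alpha> = hpoly k (\<lambda>\<beta>. if \<beta> = \<alpha> then 1 else 0)" ..
  then show ?thesis using homogeneous_poly_hpoly by metis
qed

lemma hpoly_scaleR: "hpoly k c (t *\<^sub>R x) = t ^ k * hpoly k c x"
  unfolding hpoly_def sum_distrib_left
  by (rule sum.cong) (simp_all add: monomial_scaleR monomials_degree)

lemma homogeneous_poly_scaleR: "homogeneous_poly k f \<Longrightarrow> f (t *\<^sub>R x) = t ^ k * f x"
  unfolding homogeneous_poly_iff_hpoly using hpoly_scaleR by blast

lemma continuous_on_homogeneous_poly: "homogeneous_poly k f \<Longrightarrow> continuous_on S f"
  unfolding homogeneous_poly_iff_hpoly hpoly_def monomial_def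
  by (elim exE) (simp, intro continuous_intros)

lemma form_component: "is_form k F \<Longrightarrow> b \<in> Basis \<Longrightarrow> homogeneous_poly k (\<lambda>x. F x \<bullet> b)"
  unfolding is_form_def by blast

lemma form_coeffs:
  assumes "is_form k (F :: 'a::euclidean_space \<Rightarrow> 'b::euclidean_space)"
  obtains C where "\<And>a y. a \<in> Basis \<Longrightarrow> F y \<bullet> a = hpoly k (C a) y"
proof -
  have "\<forall>a\<in>Basis. \<exists>c. (\<lambda>y. F y \<bullet> a) = hpoly k c"
    using assms unfolding is_form_def homogeneous_poly_iff_hpoly by blast
  then obtain C where "\<forall>a\<in>Basis. (\<lambda>y. F y \<bullet> a) = hpoly k (C a)"
    by (rule bchoice[elim_format]) blast
  then show ?thesis using that by metis
qed

lemma is_form_sum_Basis: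
  assumes "\<And>a. a \<in> Basis \<Longrightarrow> homogeneous_poly k (f a)"
  shows "is_form k (\<lambda>x. \<Sum>a\<in>(Basis :: 'b::euclidean_space set). f a x *\<^sub>R a)"
  unfolding is_form_def
proof
  fix b :: 'b assume b: "b \<in> Basis"
  have "(\<lambda>x. (\<Sum>a\<in>Basis. f a x *\<^sub>R a) \<bullet> b) = f b"
    using b by (simp add: inner_sum_left inner_Basis if_distrib cong: if_cong)
  then show "homogeneous_poly k (\<lambda>x. (\<Sum>a\<in>Basis. f a x *\<^sub>R a) \<bullet> b)"
    using assms[OF b] by simp
qed

lemma is_form_scaleR:
  assumes "is_form k F"
  shows "F (t *\<^sub>R x) = t ^ k *\<^sub>R F x"
  by (rule euclidean_eqI) (simp add: homogeneous_poly_scaleR[OF form_component[OF assms]])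

section \<open>Functions that are polynomial along every line\<close>

definition polynomial_on_lines :: "nat \<Rightarrow> ('a::real_vector \<Rightarrow> real) \<Rightarrow> bool" where
  "polynomial_on_lines d f \<longleftrightarrow> (\<forall>x v. \<exists>P. degree P \<le> d \<and> (\<forall>t. f (x + t *\<^sub>R v) = poly P t))"

lemma polynomial_on_lines_mono:
  assumes "polynomial_on_lines d f" "d \<le> e"
  shows "polynomial_on_lines e f"
  unfolding polynomial_on_lines_def
proof (intro allI)
  fix x v
  obtain P where "degree P \<le> d" "\<forall>t. f (x + t *\<^sub>R v) = poly P t"
    using assms(1) unfolding polynomial_on_lines_def by blast
  with assms(2) show "\<exists>P. degree P \<le> e \<and> (\<forall>t. f (x + t *\<^sub>R v) = poly P t)"
    by (intro exI[of _ P]) auto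
qed

lemma polynomial_on_lines_const: "polynomial_on_lines d (\<lambda>x. c)"
  unfolding polynomial_on_lines_def by (intro allI exI[of _ "[:c:]"]) simp

lemma polynomial_on_lines_add:
  assumes "polynomial_on_lines d f" "polynomial_on_lines d g"
  shows "polynomial_on_lines d (\<lambda>x. f x + g x)"
  unfolding polynomial_on_lines_def
proof (intro allI)
  fix x v
  from assms obtain P Q where "degree P \<le> d" "\<forall>t. f (x + t *\<^sub>R v) = poly P t"
    and "degree Q \<le> d" "\<forall>t. g (x + t *\<^sub>R v) = poly Q t"
    unfolding polynomial_on_lines_def by meson
  then show "\<exists>P. degree P \<le> d \<and> (\<forall>t. f (x + t *\<^sub>R v) + g (x + t *\<^sub>R v) = poly P t)"
    by (intro exI[of _ "P + Q"]) (simp add: degree_add_le)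
qed

lemma polynomial_on_lines_mult:
  assumes "polynomial_on_lines d f" "polynomial_on_lines e g"
  shows "polynomial_on_lines (d + e) (\<lambda>x. f x * g x)"
  unfolding polynomial_on_lines_def
proof (intro allI)
  fix x v
  from assms obtain P Q where "degree P \<le> d" "\<forall>t. f (x + t *\<^sub>R v) = poly P t"
    and "degree Q \<le> e" "\<forall>t. g (x + t *\<^sub>R v) = poly Q t"
    unfolding polynomial_on_lines_def by meson
  then show "\<exists>P. degree P \<le> d + e \<and> (\<forall>t. f (x + t *\<^sub>R v) * g (x + t *\<^sub>R v) = poly P t)"
    by (intro exI[of _ "P * Q"]) (simp add: order_trans[OF degree_mult_le add_mono])
qed

lemma polynomial_on_lines_sum:
  "finite I \<Longrightarrow> (\<And>i. i \<in> I \<Longrightarrow> polynomial_on_lines d (f i)) \<Longrightarrow>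
    polynomial_on_lines d (\<lambda>x. \<Sum>i\<in>I. f i x)"
  by (induction I rule: finite_induct) (simp_all add: polynomial_on_lines_const polynomial_on_lines_add)

lemma polynomial_on_lines_monomial:
  assumes "\<alpha> \<in> monomials k"
  shows "polynomial_on_lines k (monomial \<alpha>)"
  unfolding polynomial_on_lines_def
proof (intro allI)
  fix x v :: 'a
  define P where "P = (\<Prod>b\<in>Basis. [:x \<bullet> b, v \<bullet> b:] ^ \<alpha> b)"
  have "degree P \<le> (\<Sum>b\<in>Basis. degree ([:x \<bullet> b, v \<bullet> b:] ^ \<alpha> b))"
    unfolding P_def using degree_prod_sum_le[of Basis] by (simp add: o_def)
  also have "\<dots> \<le> (\<Sum>b\<in>Basis. \<alpha> b)"
    by (intro sum_mono order_trans[OF degree_power_le]) simp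
  finally have "degree P \<le> k"
    using monomials_degree[OF assms] by simp
  moreover have "\<forall>t. monomial \<alpha> (x + t *\<^sub>R v) = poly P t"
    unfolding P_def monomial_def by (simp add: poly_prod inner_add_left algebra_simps)
  ultimately show "\<exists>P. degree P \<le> k \<and> (\<forall>t. monomial \<alpha> (x + t *\<^sub>R v) = poly P t)"
    by blast
qed

lemma homogeneous_poly_polynomial_on_lines:
  assumes "homogeneous_poly k f"
  shows "polynomial_on_lines k f"
proof -
  obtain c where "f = hpoly k c"
    using assms unfolding homogeneous_poly_iff_hpoly by blast
  moreover have "polynomial_on_lines (0 + k) (\<lambda>x. c \<alpha> * monomial \<alpha> x)" if "\<alpha> \<in> monomials k" for \<alpha>
    by (rule polynomial_on_lines_mult[OF polynomial_on_lines_const polynomial_on_lines_monomial[OF that]])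
  ultimately show ?thesis
    unfolding hpoly_def[abs_def] by (simp add: polynomial_on_lines_sum finite_monomials)
qed

text \<open>The identity theorem: on each line through a point of W, the restriction is a polynomial
  vanishing on an interval, hence everywhere.\<close>

lemma polynomial_on_lines_eq_0:
  fixes f :: "'a::real_normed_vector \<Rightarrow> real"
  assumes "polynomial_on_lines d f" "open W" "w \<in> W" "\<forall>x\<in>W. f x = 0"
  shows "f z = 0"
proof -
  obtain e where e: "e > 0" "ball w e \<subseteq> W"
    using assms(2,3) openE by blast
  obtain P where P: "\<forall>t. f (w + t *\<^sub>R (z - w)) = poly P t"
    using assms(1) unfolding polynomial_on_lines_def by blast
  define \<delta> where "\<delta> = e / (norm (z - w) + 1)"
  have "\<delta> > 0"
    unfolding \<delta>_def using e(1) by (simp add: add_nonneg_pos)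
  have "poly P t = 0" if t: "0 < t" "t < \<delta>" for t
  proof -
    have "norm (t *\<^sub>R (z - w)) \<le> t * (norm (z - w) + 1)"
      using t(1) by simp
    also have "\<dots> < e"
      using t by (simp add: \<delta>_def pos_less_divide_eq add_nonneg_pos)
    finally have "w + t *\<^sub>R (z - w) \<in> W"
      using e(2) by (auto simp: dist_norm)
    then show ?thesis using assms(4) P by metis
  qed
  then have "{0<..<\<delta>} \<subseteq> {t. poly P t = 0}"
    by auto
  with \<open>\<delta> > 0\<close> have "P = 0"
    using poly_roots_finite infinite_Ioo finite_subset by metis
  then show ?thesis using P[rule_format, of 1] by simp
qed

lemma polynomial_on_lines_mult_eq_0:
  fixes R g :: "'a::real_normed_vector \<Rightarrow> real"
  assumes R: "polynomial_on_lines d R" and g: "polynomial_on_lines e g" "continuous_on UNIV g" "g x0 \<noteq> 0"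
    and W: "open W" "w \<in> W" "\<forall>x\<in>W. R x * g x = 0"
  shows "R z = 0"
proof -
  have "R x * g x = 0" for x
    using polynomial_on_lines_mult[OF R g(1)] W by (rule polynomial_on_lines_eq_0)
  moreover have "open {x. g x \<noteq> 0}"
    using g(2) by (intro open_Collect_neq) (auto intro: continuous_on_const)
  ultimately show ?thesis
    using R g(3) by (intro polynomial_on_lines_eq_0[of d R "{x. g x \<noteq> 0}" x0]) auto
qed

lemma inner_eq_sum_Basis: "(\<lambda>x. f x \<bullet> g x) = (\<lambda>x. \<Sum>b\<in>Basis. (f x \<bullet> b) * (g x \<bullet> b))"
  by (rule ext) (rule euclidean_inner)

lemma polynomial_on_lines_inner_forms:
  assumes "is_form j H" "is_form k F"
  shows "polynomial_on_lines (j + k) (\<lambda>x. H x \<bullet> F x)"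
  unfolding inner_eq_sum_Basis[of H F]
  by (intro polynomial_on_lines_sum polynomial_on_lines_mult finite_Basis
      homogeneous_poly_polynomial_on_lines form_component[OF assms(1)] form_component[OF assms(2)])

lemma continuous_on_inner_forms:
  assumes "is_form j H" "is_form k F"
  shows "continuous_on S (\<lambda>x. H x \<bullet> F x)"
  unfolding inner_eq_sum_Basis[of H F]
  by (intro continuous_on_sum continuous_on_mult
      continuous_on_homogeneous_poly[OF form_component[OF assms(1)]]
      continuous_on_homogeneous_poly[OF form_component[OF assms(2)]])

section \<open>Derivatives of homogeneous polynomials\<close>

definition monomial_deriv :: "('a::euclidean_space \<Rightarrow> nat) \<Rightarrow> 'a \<Rightarrow> 'a \<Rightarrow> real" where
  "monomial_deriv \<alpha> x v = (\<Sum>b\<in>Basis. (v \<bullet> b) * (real (\<alpha> b) * monomial (\<alpha>(b := \<alpha> b - 1)) x))"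

definition monomial_deriv2 :: "('a::euclidean_space \<Rightarrow> nat) \<Rightarrow> 'a \<Rightarrow> 'a \<Rightarrow> 'a \<Rightarrow> real" where
  "monomial_deriv2 \<alpha> x u w = (\<Sum>b\<in>Basis. (u \<bullet> b) * (real (\<alpha> b) * monomial_deriv (\<alpha>(b := \<alpha> b - 1)) x w))"

lemma has_derivative_monomial: "(monomial \<alpha> has_derivative monomial_deriv \<alpha> x) (at x)"
proof -
  have "((\<lambda>x. \<Prod>j\<in>Basis. (x \<bullet> j) ^ \<alpha> j) has_derivative
      (\<lambda>y. \<Sum>i\<in>Basis. (real (\<alpha> i) * (y \<bullet> i) * (x \<bullet> i) ^ (\<alpha> i - 1)) * (\<Prod>j\<in>Basis - {i}. (x \<bullet> j) ^ \<alpha> j))) (at x)"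
    by (intro has_derivative_prod has_derivative_power has_derivative_inner_left has_derivative_ident)
  moreover have "(\<lambda>y. \<Sum>i\<in>Basis. (real (\<alpha> i) * (y \<bullet> i) * (x \<bullet> i) ^ (\<alpha> i - 1)) * (\<Prod>j\<in>Basis - {i}. (x \<bullet> j) ^ \<alpha> j))
      = monomial_deriv \<alpha> x"
    unfolding monomial_deriv_def by (intro ext sum.cong refl) (simp add: monomial_fun_upd)
  ultimately show ?thesis unfolding monomial_def[abs_def] by simp
qed

lemma has_derivative_sum_cmult:
  fixes f :: "'i \<Rightarrow> 'a::real_normed_vector \<Rightarrow> real"
  assumes "finite I" "\<And>i. i \<in> I \<Longrightarrow> (f i has_derivative f' i) (at x)"
  shows "((\<lambda>y. \<Sum>i\<in>I. c i * f i y) has_derivative (\<lambda>w. \<Sum>i\<in>I. c i * f' i w)) (at x)"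
  using assms by (intro has_derivative_sum has_derivative_mult_right) auto

lemma has_derivative_monomial_deriv:
  "((\<lambda>y. monomial_deriv \<alpha> y u) has_derivative monomial_deriv2 \<alpha> x u) (at x)"
proof -
  have "((\<lambda>y. \<Sum>b\<in>Basis. ((u \<bullet> b) * real (\<alpha> b)) * monomial (\<alpha>(b := \<alpha> b - 1)) y) has_derivative
      (\<lambda>w. \<Sum>b\<in>Basis. ((u \<bullet> b) * real (\<alpha> b)) * monomial_deriv (\<alpha>(b := \<alpha> b - 1)) x w)) (at x)"
    by (intro has_derivative_sum_cmult finite_Basis has_derivative_monomial)
  then show ?thesis
    unfolding monomial_deriv_def[abs_def] monomial_deriv2_def[abs_def] by (simp add: mult.assoc)
qed

lemma monomial_deriv_self: "monomial_deriv \<alpha> x x = real (\<Sum>b\<in>Basis. \<alpha> b) * monomial \<alpha> x"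
proof -
  have "(x \<bullet> b) * (real (\<alpha> b) * monomial (\<alpha>(b := \<alpha> b - 1)) x) = real (\<alpha> b) * monomial \<alpha> x"
    if "b \<in> Basis" for b
    using that by (cases "\<alpha> b") (simp_all add: monomial_fun_upd monomial_split[of b])
  then show ?thesis
    unfolding monomial_deriv_def of_nat_sum sum_distrib_right by (rule sum.cong[OF refl])
qed

lemma monomial_deriv2_self:
  "monomial_deriv2 \<alpha> x x x = real (\<Sum>b\<in>Basis. \<alpha> b) * (real (\<Sum>b\<in>Basis. \<alpha> b) - 1) * monomial \<alpha> x"
proof -
  let ?s = "real (\<Sum>b\<in>Basis. \<alpha> b)"
  have "real (\<alpha> b) * monomial_deriv (\<alpha>(b := \<alpha> b - 1)) x x
      = (?s - 1) * (real (\<alpha> b) * monomial (\<alpha>(b := \<alpha> b - 1)) x)"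
    if b: "b \<in> Basis" for b
  proof (cases "\<alpha> b")
    case (Suc n)
    then have "(\<Sum>j\<in>Basis. (\<alpha>(b := \<alpha> b - 1)) j) + 1 = (\<Sum>j\<in>Basis. \<alpha> j)"
      using sum_Basis_fun_upd[OF b, of \<alpha> "\<alpha> b - 1"] by simp
    then have "real (\<Sum>j\<in>Basis. (\<alpha>(b := \<alpha> b - 1)) j) = ?s - 1"
      by (metis add_diff_cancel_right' of_nat_1 of_nat_add)
    then show ?thesis
      unfolding monomial_deriv_self by (simp only: mult_ac)
  qed simp
  then have "monomial_deriv2 \<alpha> x x x = (?s - 1) * monomial_deriv \<alpha> x x"
    unfolding monomial_deriv2_def monomial_deriv_def[of \<alpha> x x] sum_distrib_left
    by (intro sum.cong refl) (simp only: mult.left_commute)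
  then show ?thesis by (simp add: monomial_deriv_self)
qed

lemma monomial_deriv2_Basis:
  assumes "b \<in> (Basis :: 'a::euclidean_space set)"
  shows "monomial_deriv2 \<alpha> x b b = real (\<alpha> b) * (real (\<alpha> b) - 1) * monomial (\<alpha>(b := \<alpha> b - 2)) x"
proof -
  have delta: "(\<Sum>c\<in>Basis. (b \<bullet> c) * g c) = g b" for g :: "'a \<Rightarrow> real"
  proof -
    have "(\<Sum>c\<in>Basis. (b \<bullet> c) * g c) = (\<Sum>c\<in>Basis. if c = b then g b else 0)"
      using assms by (intro sum.cong) (auto simp: inner_Basis)
    then show ?thesis using assms by simp
  qed
  have "monomial_deriv2 \<alpha> x b b = real (\<alpha> b) * monomial_deriv (\<alpha>(b := \<alpha> b - 1)) x b"
    unfolding monomial_deriv2_def delta ..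
  also have "monomial_deriv (\<alpha>(b := \<alpha> b - 1)) x b = real (\<alpha> b - 1) * monomial (\<alpha>(b := \<alpha> b - 2)) x"
    unfolding monomial_deriv_def delta by (simp add: numeral_2_eq_2)
  finally show ?thesis by (cases "\<alpha> b = 0") (simp_all add: of_nat_diff)
qed

lemma linear_sum_inner_Basis: "linear (\<lambda>u::'a::euclidean_space. \<Sum>b\<in>Basis. (u \<bullet> b) * c b)"
  by (auto intro!: linearI simp: inner_add_left sum.distrib distrib_right sum_distrib_left mult.assoc)

lemma bilinear_monomial_deriv2: "bilinear (monomial_deriv2 \<alpha> x)"
  unfolding bilinear_def
proof safe
  show "linear (monomial_deriv2 \<alpha> x u)" for u
    unfolding monomial_deriv2_def[abs_def] monomial_deriv_def sum_distrib_left
    by (subst sum.swap) (simp add: mult_ac linear_sum_inner_Basis flip: sum_distrib_left)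
  show "linear (\<lambda>u. monomial_deriv2 \<alpha> x u w)" for w
    unfolding monomial_deriv2_def by (rule linear_sum_inner_Basis)
qed

definition hpoly_deriv :: "nat \<Rightarrow> (('a::euclidean_space \<Rightarrow> nat) \<Rightarrow> real) \<Rightarrow> 'a \<Rightarrow> 'a \<Rightarrow> real" where
  "hpoly_deriv k c y u = (\<Sum>\<alpha>\<in>monomials k. c \<alpha> * monomial_deriv \<alpha> y u)"

definition hpoly_deriv2 :: "nat \<Rightarrow> (('a::euclidean_space \<Rightarrow> nat) \<Rightarrow> real) \<Rightarrow> 'a \<Rightarrow> 'a \<Rightarrow> 'a \<Rightarrow> real" where
  "hpoly_deriv2 k c y u w = (\<Sum>\<alpha>\<in>monomials k. c \<alpha> * monomial_deriv2 \<alpha> y u w)"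

definition hpoly_laplacian :: "nat \<Rightarrow> (('a::euclidean_space \<Rightarrow> nat) \<Rightarrow> real) \<Rightarrow> 'a \<Rightarrow> real" where
  "hpoly_laplacian k c y = (\<Sum>b\<in>Basis. hpoly_deriv2 k c y b b)"

lemma has_derivative_hpoly: "(hpoly k c has_derivative hpoly_deriv k c y) (at y)"
  unfolding hpoly_def[abs_def] hpoly_deriv_def[abs_def]
  by (rule has_derivative_sum_cmult[OF finite_monomials has_derivative_monomial])

lemma has_derivative_hpoly_deriv: "((\<lambda>y. hpoly_deriv k c y u) has_derivative hpoly_deriv2 k c y u) (at y)"
  unfolding hpoly_deriv_def hpoly_deriv2_def[abs_def]
  by (rule has_derivative_sum_cmult[OF finite_monomials has_derivative_monomial_deriv])

lemma hpoly_deriv_self: "hpoly_deriv k c y y = real k * hpoly k c y"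
  unfolding hpoly_deriv_def hpoly_def sum_distrib_left
  by (rule sum.cong) (simp_all add: monomial_deriv_self monomials_degree)

lemma hpoly_deriv2_self: "hpoly_deriv2 k c y y y = real k * (real k - 1) * hpoly k c y"
  unfolding hpoly_deriv2_def hpoly_def sum_distrib_left
  by (rule sum.cong) (simp_all add: monomial_deriv2_self monomials_degree)

lemma bilinear_hpoly_deriv2: "bilinear (hpoly_deriv2 k c y)"
  using bilinear_monomial_deriv2 unfolding hpoly_deriv2_def[abs_def] bilinear_def
  by (auto intro!: linear_compose_sum linear_compose[OF _ linear_times, unfolded o_def])

lemma hpoly_laplacian_eq:
  "hpoly_laplacian k c y = (\<Sum>\<alpha>\<in>monomials k. \<Sum>b\<in>Basis.
      c \<alpha> * (real (\<alpha> b) * (real (\<alpha> b) - 1)) * monomial (\<alpha>(b := \<alpha> b - 2)) y)"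
  unfolding hpoly_laplacian_def hpoly_deriv2_def
  by (subst sum.swap) (simp add: monomial_deriv2_Basis mult.assoc)

lemma homogeneous_poly_hpoly_laplacian: "homogeneous_poly (k - 2) (hpoly_laplacian k c)"
proof -
  have "homogeneous_poly (k - 2) (\<lambda>y. c \<alpha> * (real (\<alpha> b) * (real (\<alpha> b) - 1)) * monomial (\<alpha>(b := \<alpha> b - 2)) y)"
    if \<alpha>: "\<alpha> \<in> monomials k" and b: "b \<in> Basis" for \<alpha> b
  proof (cases "\<alpha> b \<ge> 2")
    case True
    have "\<alpha> b \<le> k"
      using member_le_sum[OF b, of \<alpha>] monomials_degree[OF \<alpha>] by simp
    then have "\<alpha>(b := \<alpha> b - 2) \<in> monomials (k - 2)"
      using True by (intro monomials_fun_upd[OF \<alpha> b]) simp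
    then show ?thesis by (intro homogeneous_poly_cmult homogeneous_poly_monomial)
  next
    case False
    then have "\<alpha> b = 0 \<or> \<alpha> b = 1" by auto
    then show ?thesis by (auto simp: homogeneous_poly_zero)
  qed
  then show ?thesis
    unfolding hpoly_laplacian_eq[abs_def] by (intro homogeneous_poly_sum finite_monomials finite_Basis)
qed

lemma hpoly_laplacian_eq_0:
  assumes "k \<le> 1"
  shows "hpoly_laplacian k c y = 0"
proof -
  have "\<alpha> b \<le> 1" if "\<alpha> \<in> monomials k" "b \<in> Basis" for \<alpha> b
    using member_le_sum[OF that(2), of \<alpha>] monomials_degree[OF that(1)] assms by simp
  then have "real (\<alpha> b) * (real (\<alpha> b) - 1) = 0" if "\<alpha> \<in> monomials k" "b \<in> Basis" for \<alpha> b
    using le_Suc_eq[of "\<alpha> b" 0] that by fastforce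
  then show ?thesis
    unfolding hpoly_laplacian_eq by (intro sum.neutral ballI) force
qed

section \<open>Second derivatives along great circles\<close>

definition has_second_vector_derivative_at_0 :: "(real \<Rightarrow> 'b::real_normed_vector) \<Rightarrow> 'b \<Rightarrow> bool" where
  "has_second_vector_derivative_at_0 c v \<longleftrightarrow>
     (\<exists>c'. (\<forall>t. (c has_vector_derivative c' t) (at t)) \<and> (c' has_vector_derivative v) (at 0))"

lemma second_vector_derivative_at_0:
  assumes "has_second_vector_derivative_at_0 c v"
  shows "vector_derivative (\<lambda>s. vector_derivative c (at s)) (at 0) = v"
proof -
  obtain c' where c': "\<And>t. (c has_vector_derivative c' t) (at t)" "(c' has_vector_derivative v) (at 0)"
    using assms unfolding has_second_vector_derivative_at_0_def by blast
  then have "(\<lambda>s. vector_derivative c (at s)) = c'"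
    by (auto intro!: ext vector_derivative_at)
  with c'(2) show ?thesis by (simp add: vector_derivative_at)
qed

lemma has_second_vector_derivative_at_0_sum:
  assumes "finite I" "\<And>i. i \<in> I \<Longrightarrow> has_second_vector_derivative_at_0 (c i) (v i)"
  shows "has_second_vector_derivative_at_0 (\<lambda>t. \<Sum>i\<in>I. c i t) (\<Sum>i\<in>I. v i)"
proof -
  have "\<forall>i\<in>I. \<exists>c'. (\<forall>t. (c i has_vector_derivative c' t) (at t)) \<and> (c' has_vector_derivative v i) (at 0)"
    using assms(2) unfolding has_second_vector_derivative_at_0_def by blast
  then obtain c' where "\<forall>i\<in>I. (\<forall>t. (c i has_vector_derivative c' i t) (at t)) \<and> (c' i has_vector_derivative v i) (at 0)"
    by (rule bchoice[elim_format]) blast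
  with assms(1) show ?thesis
    unfolding has_second_vector_derivative_at_0_def
    by (intro exI[of _ "\<lambda>t. \<Sum>i\<in>I. c' i t"]) (auto intro!: has_vector_derivative_sum)
qed

lemma has_second_vector_derivative_at_0_scaleR:
  assumes "has_second_vector_derivative_at_0 c v"
  shows "has_second_vector_derivative_at_0 (\<lambda>t. c t *\<^sub>R a) (v *\<^sub>R a)"
proof -
  obtain c' where "\<forall>t. (c has_vector_derivative c' t) (at t)" "(c' has_vector_derivative v) (at 0)"
    using assms unfolding has_second_vector_derivative_at_0_def by blast
  then show ?thesis
    unfolding has_second_vector_derivative_at_0_def
    by (intro exI[of _ "\<lambda>t. c' t *\<^sub>R a"])
      (simp add: bounded_linear.has_vector_derivative[OF bounded_linear_scaleR_left])
qed

lemma has_second_vector_derivative_at_0_Pair: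
  assumes "has_second_vector_derivative_at_0 c v" "has_second_vector_derivative_at_0 d w"
  shows "has_second_vector_derivative_at_0 (\<lambda>t. (c t, d t)) (v, w)"
proof -
  obtain c' d' where "\<forall>t. (c has_vector_derivative c' t) (at t)" "(c' has_vector_derivative v) (at 0)"
    and "\<forall>t. (d has_vector_derivative d' t) (at t)" "(d' has_vector_derivative w) (at 0)"
    using assms unfolding has_second_vector_derivative_at_0_def by blast
  then show ?thesis
    unfolding has_second_vector_derivative_at_0_def
    by (intro exI[of _ "\<lambda>t. (c' t, d' t)"]) (simp add: has_vector_derivative_Pair)
qed

lemma has_second_vector_derivative_at_0_great_circle:
  fixes f :: "'a::real_normed_vector \<Rightarrow> real"
  assumes Df: "\<And>y. (f has_derivative Df y) (at y)"
    and D2f: "\<And>y u. ((\<lambda>y. Df y u) has_derivative D2f y u) (at y)"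
  shows "has_second_vector_derivative_at_0 (\<lambda>t. f (cos t *\<^sub>R x + sin t *\<^sub>R e)) (D2f x e e - Df x x)"
proof -
  define \<gamma> where "\<gamma> t = cos t *\<^sub>R x + sin t *\<^sub>R e" for t
  define \<gamma>' where "\<gamma>' t = - sin t *\<^sub>R x + cos t *\<^sub>R e" for t
  have \<gamma>: "(\<gamma> has_vector_derivative \<gamma>' t) (at t)" for t
    unfolding \<gamma>_def \<gamma>'_def
    by (auto intro!: derivative_eq_intros simp: has_real_derivative_iff_has_vector_derivative[symmetric])
  have first: "((\<lambda>t. f (\<gamma> t)) has_vector_derivative Df (\<gamma> t) (\<gamma>' t)) (at t)" for t
    using vector_derivative_diff_chain_within[OF \<gamma> has_derivative_at_withinI[OF Df]]
    by (simp add: o_def)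
  have lin: "linear (Df y)" for y
    using has_derivative_linear[OF Df] .
  have "Df (\<gamma> s) (\<gamma>' s) = - sin s * Df (\<gamma> s) x + cos s * Df (\<gamma> s) e" for s
    unfolding \<gamma>'_def linear_add[OF lin] linear_scale[OF lin] by simp
  moreover have "((\<lambda>s. Df (\<gamma> s) u) has_real_derivative D2f x u e) (at 0)" for u
    using vector_derivative_diff_chain_within[OF \<gamma>[of 0] has_derivative_at_withinI[OF D2f]]
    by (simp add: o_def \<gamma>_def \<gamma>'_def has_real_derivative_iff_has_vector_derivative)
  ultimately have "((\<lambda>s. Df (\<gamma> s) (\<gamma>' s)) has_real_derivative D2f x e e - Df x x) (at 0)"
    by (auto intro!: derivative_eq_intros simp: \<gamma>_def)
  then have "has_second_vector_derivative_at_0 (\<lambda>t. f (\<gamma> t)) (D2f x e e - Df x x)"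
    unfolding has_second_vector_derivative_at_0_def has_real_derivative_iff_has_vector_derivative
    by (intro exI[of _ "\<lambda>s. Df (\<gamma> s) (\<gamma>' s)"] conjI allI first)
  then show ?thesis by (simp add: \<gamma>_def)
qed

section \<open>Orthonormal frames of the tangent space\<close>

lemma tangent_onb_exists: "\<exists>B. tangent_onb (x::'a::euclidean_space) B"
proof -
  have "subspace {v::'a. v \<bullet> x = 0}"
    using subspace_hyperplane[of x] by (simp add: inner_commute)
  then obtain B where "B \<subseteq> {v. v \<bullet> x = 0}" "pairwise orthogonal B" "\<And>v. v \<in> B \<Longrightarrow> norm v = 1"
    "independent B" "span B = {v. v \<bullet> x = 0}"
    by (rule orthonormal_basis_subspace) blast
  then show ?thesis
    unfolding tangent_onb_def using independent_imp_finite by blast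
qed

lemma tangent_onbD:
  assumes "tangent_onb x B"
  shows "finite B" and "\<And>e. e \<in> B \<Longrightarrow> e \<bullet> x = 0"
    and "\<And>e e'. e \<in> B \<Longrightarrow> e' \<in> B \<Longrightarrow> e \<bullet> e' = (if e = e' then 1 else 0)"
proof -
  show "finite B" using assms unfolding tangent_onb_def by simp
  show "e \<bullet> x = 0" if "e \<in> B" for e
    using assms span_base[OF that] unfolding tangent_onb_def by blast
  show "e \<bullet> e' = (if e = e' then 1 else 0)" if "e \<in> B" "e' \<in> B" for e e'
    using assms that unfolding tangent_onb_def pairwise_def orthogonal_def
    by (metis norm_eq_1)
qed

lemma card_tangent_onb:
  fixes x :: "'a::euclidean_space"
  assumes "tangent_onb x B" "x \<noteq> 0"
  shows "card B = DIM('a) - 1"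
proof -
  have "independent B"
    using assms(1) unfolding tangent_onb_def by (intro pairwise_orthogonal_independent) auto
  then have "card B = dim (span B)"
    by (simp add: dim_eq_card_independent)
  also have "span B = {v. x \<bullet> v = 0}"
    using assms(1) unfolding tangent_onb_def by (simp add: inner_commute)
  finally show ?thesis
    using dim_hyperplane[OF assms(2)] by simp
qed

lemma tangent_onb_not_mem:
  assumes "tangent_onb x B" "norm x = 1"
  shows "x \<notin> B"
proof
  assume "x \<in> B"
  then have "x \<bullet> x = 0" by (rule tangent_onbD(2)[OF assms(1)])
  with assms(2) show False by simp
qed

lemma tangent_onb_expansion:
  assumes T: "tangent_onb x B" and x: "norm x = 1"
  shows "u = (\<Sum>e\<in>insert x B. (u \<bullet> e) *\<^sub>R e)"
proof -
  note B = tangent_onbD[OF T] and xB = tangent_onb_not_mem[OF T x]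
  define w where "w = u - (\<Sum>e\<in>insert x B. (u \<bullet> e) *\<^sub>R e)"
  have "x \<bullet> x = 1"
    using x by (simp flip: power2_norm_eq_inner)
  moreover have "(\<Sum>e\<in>B. (u \<bullet> e) * (e \<bullet> x)) = 0"
    using B(2) by simp
  ultimately have "w \<bullet> x = 0"
    using B(1) xB by (simp add: w_def inner_diff_left inner_add_left inner_sum_left)
  then have "w \<in> span B"
    using T unfolding tangent_onb_def by simp
  moreover have "orthogonal w e0" if e0: "e0 \<in> B" for e0
    unfolding orthogonal_def
  proof -
    have "(\<Sum>e\<in>B. (u \<bullet> e) * (e \<bullet> e0)) = (\<Sum>e\<in>B. if e = e0 then u \<bullet> e0 else 0)"
      using B(3) e0 by (intro sum.cong) auto
    also have "\<dots> = u \<bullet> e0"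
      using B(1) e0 by simp
    finally show "w \<bullet> e0 = 0"
      using B(1,2) e0 xB by (simp add: w_def inner_diff_left inner_add_left inner_sum_left inner_commute[of x])
  qed
  ultimately have "orthogonal w w"
    by (rule orthogonal_to_span)
  then have "w = 0"
    by (simp add: orthogonal_self)
  then show ?thesis
    unfolding w_def by simp
qed

lemma trace_eq_trace_Basis:
  fixes D :: "'a::euclidean_space \<Rightarrow> 'a \<Rightarrow> real"
  assumes D: "bilinear D" and E: "finite E" "\<And>u. u = (\<Sum>e\<in>E. (u \<bullet> e) *\<^sub>R e)"
  shows "(\<Sum>e\<in>E. D e e) = (\<Sum>b\<in>Basis. D b b)"
proof -
  have lin: "linear (D u)" "linear (\<lambda>u. D u w)" for u w
    using D by (simp_all add: bilinear_def)
  have "(\<Sum>b\<in>Basis. D b b) = (\<Sum>b\<in>Basis. D b (\<Sum>e\<in>E. (b \<bullet> e) *\<^sub>R e))"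
    by (intro sum.cong refl arg_cong[where f = "D _"] E(2))
  also have "\<dots> = (\<Sum>b\<in>Basis. \<Sum>e\<in>E. (e \<bullet> b) * D b e)"
    by (simp only: linear_sum[OF lin(1)] linear_scale[OF lin(1)] inner_commute real_scaleR_def)
  also have "\<dots> = (\<Sum>e\<in>E. \<Sum>b\<in>Basis. (e \<bullet> b) * D b e)"
    by (rule sum.swap)
  also have "\<dots> = (\<Sum>e\<in>E. D (\<Sum>b\<in>Basis. (e \<bullet> b) *\<^sub>R b) e)"
    by (simp only: linear_sum[OF lin(2)] linear_scale[OF lin(2)] real_scaleR_def)
  finally show ?thesis
    by (simp only: euclidean_representation)
qed

lemma trace_tangent_onb:
  fixes D :: "'a::euclidean_space \<Rightarrow> 'a \<Rightarrow> real"
  assumes "bilinear D" "tangent_onb x B" "norm x = 1"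
  shows "(\<Sum>e\<in>B. D e e) = (\<Sum>b\<in>Basis. D b b) - D x x"
proof -
  have "x \<notin> B"
    by (rule tangent_onb_not_mem[OF assms(2,3)])
  moreover have "(\<Sum>e\<in>insert x B. D e e) = (\<Sum>b\<in>Basis. D b b)"
    using assms tangent_onbD(1)[OF assms(2)]
    by (intro trace_eq_trace_Basis tangent_onb_expansion) auto
  ultimately show ?thesis
    using tangent_onbD(1)[OF assms(2)] by simp
qed

section \<open>The spherical Laplacian of a form\<close>

lemma has_second_vector_derivative_at_0_form:
  assumes "\<And>a y. a \<in> Basis \<Longrightarrow> F y \<bullet> a = hpoly k (C a) y"
  shows "has_second_vector_derivative_at_0 (\<lambda>t. F (cos t *\<^sub>R x + sin t *\<^sub>R e))
    (\<Sum>a\<in>Basis. (hpoly_deriv2 k (C a) x e e - hpoly_deriv k (C a) x x) *\<^sub>R a)"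
proof -
  have F: "F y = (\<Sum>a\<in>Basis. hpoly k (C a) y *\<^sub>R a)" for y
    by (subst euclidean_representation[symmetric, of "F y"]) (intro sum.cong refl, simp add: assms)
  show ?thesis
    unfolding F
    by (intro has_second_vector_derivative_at_0_sum has_second_vector_derivative_at_0_scaleR
        has_second_vector_derivative_at_0_great_circle has_derivative_hpoly has_derivative_hpoly_deriv
        finite_Basis)
qed

lemma sphere_laplacian_hpoly_components:
  fixes F :: "'a::euclidean_space \<Rightarrow> 'b::euclidean_space"
  assumes C: "\<And>a y. a \<in> Basis \<Longrightarrow> F y \<bullet> a = hpoly k (C a) y" and x: "x \<in> sphere 0 1"
  shows "sphere_laplacian F x = (\<Sum>a\<in>Basis. hpoly_laplacian k (C a) x *\<^sub>R a)
    - (real k * (real k + real DIM('a) - 2)) *\<^sub>R F x"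
proof -
  define B where "B = (SOME B. tangent_onb x B)"
  have T: "tangent_onb x B"
    unfolding B_def by (rule someI_ex[OF tangent_onb_exists])
  have card: "real (card B) = real DIM('a) - 1"
    using card_tangent_onb[OF T] x by (force simp: of_nat_diff Suc_le_eq)
  let ?ev = "real k * (real k + real DIM('a) - 2)"
  have component: "(\<Sum>e\<in>B. hpoly_deriv2 k (C a) x e e - hpoly_deriv k (C a) x x)
      = hpoly_laplacian k (C a) x - ?ev * (F x \<bullet> a)"
    if a: "a \<in> Basis" for a
  proof -
    have "(\<Sum>e\<in>B. hpoly_deriv2 k (C a) x e e)
        = hpoly_laplacian k (C a) x - real k * (real k - 1) * (F x \<bullet> a)"
      using trace_tangent_onb[OF bilinear_hpoly_deriv2 T] x
      unfolding hpoly_laplacian_def C[OF a] by (simp add: hpoly_deriv2_self)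
    then show ?thesis
      by (simp add: sum_subtractf card hpoly_deriv_self C[OF a] algebra_simps)
  qed
  have gsd: "geodesic_second_deriv F x
      = (\<lambda>e. \<Sum>a\<in>Basis. (hpoly_deriv2 k (C a) x e e - hpoly_deriv k (C a) x x) *\<^sub>R a)"
    unfolding geodesic_second_deriv_def
    by (intro ext second_vector_derivative_at_0[OF has_second_vector_derivative_at_0_form[OF C]])
  have "sphere_laplacian F x
      = (\<Sum>a\<in>Basis. (\<Sum>e\<in>B. hpoly_deriv2 k (C a) x e e - hpoly_deriv k (C a) x x) *\<^sub>R a)"
    unfolding sphere_laplacian_def B_def[symmetric] gsd by (subst sum.swap) (simp only: scaleR_sum_left)
  also have "\<dots> = (\<Sum>a\<in>Basis. (hpoly_laplacian k (C a) x - ?ev * (F x \<bullet> a)) *\<^sub>R a)"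
    by (intro sum.cong refl) (simp add: component)
  also have "\<dots> = (\<Sum>a\<in>Basis. hpoly_laplacian k (C a) x *\<^sub>R a) - ?ev *\<^sub>R (\<Sum>a\<in>Basis. (F x \<bullet> a) *\<^sub>R a)"
    unfolding scaleR_diff_left sum_subtractf scaleR_sum_right by simp
  finally show ?thesis
    by (simp only: euclidean_representation)
qed

text \<open>H is the Euclidean Laplacian of F.\<close>

lemma sphere_laplacian_form:
  fixes F :: "'a::euclidean_space \<Rightarrow> 'b::euclidean_space"
  assumes "is_form k F"
  obtains H where "is_form (k - 2) H" and "k \<le> 1 \<Longrightarrow> H = (\<lambda>_. 0)"
    and "\<And>x. x \<in> sphere 0 1 \<Longrightarrow>
      sphere_laplacian F x = H x - (real k * (real k + real DIM('a) - 2)) *\<^sub>R F x"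
proof -
  obtain C where C: "\<And>a y. a \<in> Basis \<Longrightarrow> F y \<bullet> a = hpoly k (C a) y"
    using form_coeffs[OF assms] by blast
  define H where "H y = (\<Sum>a\<in>Basis. hpoly_laplacian k (C a) y *\<^sub>R a)" for y
  have "is_form (k - 2) H"
    unfolding H_def by (intro is_form_sum_Basis homogeneous_poly_hpoly_laplacian)
  moreover have "H = (\<lambda>_. 0)" if "k \<le> 1"
    using that by (simp add: H_def fun_eq_iff hpoly_laplacian_eq_0)
  moreover note sphere_laplacian_hpoly_components[OF C, folded H_def]
  ultimately show ?thesis using that by blast
qed

lemma form_has_second_vector_derivative_at_0:
  assumes "is_form k F"
  shows "\<exists>v. has_second_vector_derivative_at_0 (\<lambda>t. F (cos t *\<^sub>R x + sin t *\<^sub>R e)) v"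
proof -
  obtain C where "\<And>a y. a \<in> Basis \<Longrightarrow> F y \<bullet> a = hpoly k (C a) y"
    using form_coeffs[OF assms] by blast
  from has_second_vector_derivative_at_0_form[OF this] show ?thesis by blast
qed

lemma sphere_laplacian_Pair:
  assumes "\<And>e. \<exists>v. has_second_vector_derivative_at_0 (\<lambda>t. F1 (cos t *\<^sub>R x + sin t *\<^sub>R e)) v"
    and "\<And>e. \<exists>v. has_second_vector_derivative_at_0 (\<lambda>t. F2 (cos t *\<^sub>R x + sin t *\<^sub>R e)) v"
  shows "sphere_laplacian (\<lambda>y. (F1 y, F2 y)) x = (sphere_laplacian F1 x, sphere_laplacian F2 x)"
proof -
  have "geodesic_second_deriv (\<lambda>y. (F1 y, F2 y)) x
      = (\<lambda>e. (geodesic_second_deriv F1 x e, geodesic_second_deriv F2 x e))"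
  proof
    fix e
    obtain v1 v2
      where v1: "has_second_vector_derivative_at_0 (\<lambda>t. F1 (cos t *\<^sub>R x + sin t *\<^sub>R e)) v1"
        and v2: "has_second_vector_derivative_at_0 (\<lambda>t. F2 (cos t *\<^sub>R x + sin t *\<^sub>R e)) v2"
      using assms by blast
    show "geodesic_second_deriv (\<lambda>y. (F1 y, F2 y)) x e
        = (geodesic_second_deriv F1 x e, geodesic_second_deriv F2 x e)"
      unfolding geodesic_second_deriv_def second_vector_derivative_at_0[OF v1]
        second_vector_derivative_at_0[OF v2]
      by (rule second_vector_derivative_at_0[OF has_second_vector_derivative_at_0_Pair[OF v1 v2]])
  qed
  then show ?thesis
    unfolding sphere_laplacian_def by (simp add: prod_eq_iff fst_sum snd_sum)
qed

section \<open>Divisibility of forms by the squared norm\<close>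

lemma degree_1_poly_root:
  fixes p :: "'a::field poly"
  assumes deg: "degree p = 1"
  shows "poly p (- coeff p 0 / coeff p 1) = 0"
proof -
  have p: "p = [:coeff p 0, coeff p 1:]"
  proof (rule poly_eqI)
    fix n
    show "coeff p n = coeff [:coeff p 0, coeff p 1:] n"
    proof (cases "n \<le> 1")
      case True
      then have "n = 0 \<or> n = 1" by auto
      then show ?thesis by auto
    next
      case False
      then show ?thesis using deg by (simp add: coeff_eq_0 coeff_pCons split: nat.split)
    qed
  qed
  have "p \<noteq> 0" using deg by auto
  then have "coeff p 1 \<noteq> 0" using deg by (metis leading_coeff_0_iff)
  then show ?thesis by (subst p) simp
qed

lemma irreducible_degree_2_poly:
  fixes p :: "'a::field poly"
  assumes deg: "degree p = 2" and no_root: "\<And>x. poly p x \<noteq> 0"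
  shows "irreducible p"
proof (rule irreducibleI)
  show p0: "p \<noteq> 0" using deg by auto
  show "\<not> p dvd 1" using deg p0 by (simp add: is_unit_iff_degree)
  fix a b assume p: "p = a * b"
  then have "a \<noteq> 0" "b \<noteq> 0" using p0 by auto
  then have "degree a + degree b = 2"
    using deg p by (simp add: degree_mult_eq)
  then consider "degree a = 0" | "degree b = 0" | "degree a = 1"
    by linarith
  then show "a dvd 1 \<or> b dvd 1"
  proof cases
    case 3
    then have "poly a (- coeff a 0 / coeff a 1) = 0"
      by (rule degree_1_poly_root)
    with no_root[of "- coeff a 0 / coeff a 1"] show ?thesis
      by (simp add: p)
  qed (use \<open>a \<noteq> 0\<close> \<open>b \<noteq> 0\<close> in \<open>simp_all add: is_unit_iff_degree\<close>)
qed

lemma quadratic_power_dvd_imp_eq_0: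
  fixes q c0 c1 :: real
  assumes q: "q > 0" and dvd: "[:q, 0, 1:] ^ k dvd P * ([:q, 0, 1:] * R + [:c0, c1:])"
    and c: "[:c0, c1:] \<noteq> 0" and deg: "degree P < 2 * k"
  shows "P = 0"
proof (rule ccontr)
  assume "P \<noteq> 0"
  define \<pi> where "\<pi> = [:q, 0, 1::real:]"
  have "poly \<pi> x \<noteq> 0" for x
  proof -
    have "0 < q + x * x" using q by (intro add_pos_nonneg) auto
    then show ?thesis by (simp add: \<pi>_def)
  qed
  then have "prime_elem \<pi>"
    by (intro field_poly_irreducible_imp_prime irreducible_degree_2_poly) (simp_all add: \<pi>_def)
  moreover have "\<not> \<pi> dvd \<pi> * R + [:c0, c1:]"
  proof
    assume "\<pi> dvd \<pi> * R + [:c0, c1:]"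
    then have "\<pi> dvd [:c0, c1:]"
      using dvd_add_right_iff[of \<pi> "\<pi> * R" "[:c0, c1:]"] by simp
    then have "degree \<pi> \<le> degree [:c0, c1:]"
      using c by (rule dvd_imp_degree_le)
    moreover have "degree [:c0, c1:] \<le> 1"
      using degree_pCons_le[of c0 "[:c1:]"] by simp
    ultimately show False by (simp add: \<pi>_def)
  qed
  ultimately have "\<pi> ^ k dvd P"
    using prime_elem_power_dvd_cases[OF dvd[folded \<pi>_def], of k 1] by auto
  then have "degree (\<pi> ^ k) \<le> degree P"
    using \<open>P \<noteq> 0\<close> by (rule dvd_imp_degree_le)
  with deg show False
    by (simp add: \<pi>_def degree_power_eq)
qed

definition invariant_along :: "'a::real_vector \<Rightarrow> ('a \<Rightarrow> real) \<Rightarrow> bool" where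
  "invariant_along b f \<longleftrightarrow> (\<forall>x t. f (x + t *\<^sub>R b) = f x)"

lemma invariant_along_zero: "invariant_along b (\<lambda>x. 0)"
  by (simp add: invariant_along_def)

lemma invariant_along_monomial:
  assumes "b \<in> Basis" "\<alpha> b = 0"
  shows "invariant_along b (monomial \<alpha>)"
  unfolding invariant_along_def monomial_def
proof (intro allI prod.cong refl)
  fix x t and c :: 'a assume "c \<in> Basis"
  with assms show "((x + t *\<^sub>R b) \<bullet> c) ^ \<alpha> c = (x \<bullet> c) ^ \<alpha> c"
    by (cases "c = b") (simp_all add: inner_add_left inner_Basis)
qed

text \<open>Division with remainder by the squared norm with respect to the coordinate along b:
  the remainder (x \<bullet> b) A x + B x is at most linear in that coordinate.\<close>

definition norm_decomposition ::
    "'a::euclidean_space \<Rightarrow> nat \<Rightarrow> ('a \<Rightarrow> real) \<Rightarrow> ('a \<Rightarrow> real) \<Rightarrow> ('a \<Rightarrow> real) \<Rightarrow> ('a \<Rightarrow> real) \<Rightarrow> bool"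
  where
  "norm_decomposition b d f Q A B \<longleftrightarrow>
     homogeneous_poly (d - 2) Q \<and> homogeneous_poly (d - 1) A \<and> homogeneous_poly d B \<and>
     invariant_along b A \<and> invariant_along b B \<and> (\<forall>x. f x = (x \<bullet> x) * Q x + (x \<bullet> b) * A x + B x)"

lemma norm_decomposition_zero: "norm_decomposition b d (\<lambda>x. 0) (\<lambda>x. 0) (\<lambda>x. 0) (\<lambda>x. 0)"
  by (simp add: norm_decomposition_def invariant_along_zero homogeneous_poly_zero)

lemma norm_decomposition_add:
  assumes "norm_decomposition b d f Q A B" "norm_decomposition b d f' Q' A' B'"
  shows "norm_decomposition b d (\<lambda>x. f x + f' x) (\<lambda>x. Q x + Q' x) (\<lambda>x. A x + A' x) (\<lambda>x. B x + B' x)"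
  using assms unfolding norm_decomposition_def invariant_along_def
  by (simp add: homogeneous_poly_add algebra_simps)

lemma norm_decomposition_cmult:
  assumes "norm_decomposition b d f Q A B"
  shows "norm_decomposition b d (\<lambda>x. c * f x) (\<lambda>x. c * Q x) (\<lambda>x. c * A x) (\<lambda>x. c * B x)"
  using assms unfolding norm_decomposition_def invariant_along_def
  by (simp add: homogeneous_poly_cmult algebra_simps)

lemma norm_decomposition_sum:
  assumes "finite I" "\<And>i. i \<in> I \<Longrightarrow> \<exists>Q A B. norm_decomposition b d (f i) Q A B"
  shows "\<exists>Q A B. norm_decomposition b d (\<lambda>x. \<Sum>i\<in>I. f i x) Q A B"
  using assms
proof (induction I rule: finite_induct)
  case empty
  show ?case using norm_decomposition_zero by (simp, blast)
next
  case (insert i I)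
  obtain Q A B where "norm_decomposition b d (f i) Q A B"
    using insert.prems by blast
  moreover obtain Q' A' B' where "norm_decomposition b d (\<lambda>x. \<Sum>i\<in>I. f i x) Q' A' B'"
    using insert.IH insert.prems by blast
  ultimately have "norm_decomposition b d (\<lambda>x. \<Sum>i\<in>insert i I. f i x)
      (\<lambda>x. Q x + Q' x) (\<lambda>x. A x + A' x) (\<lambda>x. B x + B' x)"
    using insert.hyps by (simp add: norm_decomposition_add)
  then show ?case by blast
qed

lemma monomial_reduce:
  assumes b: "b \<in> Basis" and "\<alpha> b \<ge> 2"
  shows "monomial \<alpha> x = (x \<bullet> x) * monomial (\<alpha>(b := \<alpha> b - 2)) x
    - (\<Sum>c\<in>Basis - {b}. monomial (\<alpha>(b := \<alpha> b - 2, c := \<alpha> c + 2)) x)"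
proof -
  define \<beta> where "\<beta> = \<alpha>(b := \<alpha> b - 2)"
  have add2: "monomial (\<beta>(c := \<beta> c + 2)) x = (x \<bullet> c) ^ 2 * monomial \<beta> x" if c: "c \<in> Basis" for c
    unfolding monomial_fun_upd[OF c] monomial_split[OF c, of \<beta>] by (simp add: power_add power2_eq_square)
  have "\<alpha> = \<beta>(b := \<beta> b + 2)"
    using assms(2) by (auto simp: \<beta>_def fun_eq_iff)
  then have "monomial \<alpha> x = (x \<bullet> b) ^ 2 * monomial \<beta> x"
    using add2[OF b] by simp
  moreover have "(\<Sum>c\<in>Basis - {b}. monomial (\<alpha>(b := \<alpha> b - 2, c := \<alpha> c + 2)) x)
      = (\<Sum>c\<in>Basis - {b}. (x \<bullet> c) ^ 2) * monomial \<beta> x"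
    unfolding sum_distrib_right
  proof (intro sum.cong refl)
    fix c assume c: "c \<in> Basis - {b}"
    then have "\<alpha>(b := \<alpha> b - 2, c := \<alpha> c + 2) = \<beta>(c := \<beta> c + 2)"
      by (simp add: \<beta>_def)
    then show "monomial (\<alpha>(b := \<alpha> b - 2, c := \<alpha> c + 2)) x = (x \<bullet> c) ^ 2 * monomial \<beta> x"
      using add2 c by simp
  qed
  moreover have "x \<bullet> x = (x \<bullet> b) ^ 2 + (\<Sum>c\<in>Basis - {b}. (x \<bullet> c) ^ 2)"
    using b by (subst euclidean_inner) (simp add: power2_eq_square sum.remove)
  ultimately show ?thesis
    by (simp only: \<beta>_def[symmetric]) (simp add: algebra_simps)
qed

lemma monomial_norm_decomposition_linear:
  assumes b: "b \<in> Basis" and \<alpha>: "\<alpha> \<in> monomials d" and "\<alpha> b \<le> 1"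
  shows "\<exists>Q A B. norm_decomposition b d (monomial \<alpha>) Q A B"
proof (cases "\<alpha> b = 0")
  case True
  then have "norm_decomposition b d (monomial \<alpha>) (\<lambda>x. 0) (\<lambda>x. 0) (monomial \<alpha>)"
    using b \<alpha> unfolding norm_decomposition_def
    by (simp add: homogeneous_poly_zero homogeneous_poly_monomial invariant_along_monomial
        invariant_along_zero)
  then show ?thesis by blast
next
  case False
  with assms(3) have 1: "\<alpha> b = 1" by simp
  define \<beta> where "\<beta> = \<alpha>(b := 0)"
  have "\<beta> \<in> monomials (d - 1)"
    unfolding \<beta>_def using 1 monomials_degree[OF \<alpha>] member_le_sum[OF b, of \<alpha>]
    by (intro monomials_fun_upd[OF \<alpha> b]) auto
  moreover have "monomial \<alpha> x = (x \<bullet> b) * monomial \<beta> x" for x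
    using b 1 by (simp add: \<beta>_def monomial_fun_upd monomial_split[of b])
  ultimately have "norm_decomposition b d (monomial \<alpha>) (\<lambda>x. 0) (monomial \<beta>) (\<lambda>x. 0)"
    using b unfolding norm_decomposition_def
    by (simp add: homogeneous_poly_zero homogeneous_poly_monomial invariant_along_monomial
        invariant_along_zero \<beta>_def)
  then show ?thesis by blast
qed

lemma monomial_norm_decomposition:
  assumes b: "b \<in> Basis"
  shows "\<alpha> \<in> monomials d \<Longrightarrow> \<exists>Q A B. norm_decomposition b d (monomial \<alpha>) Q A B"
proof (induction "\<alpha> b" arbitrary: \<alpha> rule: less_induct)
  case less
  note \<alpha> = less.prems
  show ?case
  proof (cases "\<alpha> b \<le> 1")
    case True
    then show ?thesis by (rule monomial_norm_decomposition_linear[OF b \<alpha>])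
  next
    case False
    then have ge2: "\<alpha> b \<ge> 2" by simp
    define \<beta> where "\<beta> = \<alpha>(b := \<alpha> b - 2)"
    have "\<alpha> b \<le> d"
      using member_le_sum[OF b, of \<alpha>] monomials_degree[OF \<alpha>] by simp
    then have \<beta>: "\<beta> \<in> monomials (d - 2)"
      unfolding \<beta>_def using ge2 by (intro monomials_fun_upd[OF \<alpha> b]) auto
    have IH: "\<exists>Q A B. norm_decomposition b d (monomial (\<beta>(c := \<alpha> c + 2))) Q A B"
      if c: "c \<in> Basis - {b}" for c
    proof (rule less.hyps)
      show "(\<beta>(c := \<alpha> c + 2)) b < \<alpha> b"
        using c ge2 by (auto simp: \<beta>_def)
      show "\<beta>(c := \<alpha> c + 2) \<in> monomials d"
        using c \<beta> \<open>\<alpha> b \<le> d\<close> ge2 by (intro monomials_fun_upd) (auto simp: \<beta>_def)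
    qed
    then obtain Q A B
      where QAB: "norm_decomposition b d (\<lambda>x. \<Sum>c\<in>Basis - {b}. monomial (\<beta>(c := \<alpha> c + 2)) x) Q A B"
      using norm_decomposition_sum[of "Basis - {b}" b d "\<lambda>c. monomial (\<beta>(c := \<alpha> c + 2))", OF _ IH]
      by auto
    have "norm_decomposition b d (\<lambda>x. (x \<bullet> x) * monomial \<beta> x + 0 + 0) (monomial \<beta>) (\<lambda>x. 0) (\<lambda>x. 0)"
      using \<beta> by (simp add: norm_decomposition_def homogeneous_poly_monomial homogeneous_poly_zero
          invariant_along_zero)
    from norm_decomposition_add[OF this norm_decomposition_cmult[OF QAB, of "- 1"]]
    have "norm_decomposition b d (monomial \<alpha>)
        (\<lambda>x. monomial \<beta> x + - 1 * Q x) (\<lambda>x. 0 + - 1 * A x) (\<lambda>x. 0 + - 1 * B x)"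
      unfolding monomial_reduce[of b \<alpha>, OF b ge2, folded \<beta>_def] by simp
    then show ?thesis by blast
  qed
qed

lemma homogeneous_poly_norm_decomposition:
  assumes "b \<in> Basis" "homogeneous_poly d f"
  shows "\<exists>Q A B. norm_decomposition b d f Q A B"
proof -
  obtain c where f: "f = hpoly d c"
    using assms(2) unfolding homogeneous_poly_iff_hpoly by blast
  have "\<exists>Q A B. norm_decomposition b d (\<lambda>x. c \<alpha> * monomial \<alpha> x) Q A B"
    if "\<alpha> \<in> monomials d" for \<alpha>
    using monomial_norm_decomposition[OF assms(1) that] norm_decomposition_cmult by blast
  then show ?thesis
    unfolding f hpoly_def[abs_def] by (intro norm_decomposition_sum finite_monomials)
qed

text \<open>Along the line through y in the unit direction b, orthogonal to y, the squared norm becomes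
  the irreducible quadratic q + t^2 with q = y \<bullet> y > 0, so its k-th power cannot divide the
  product of a polynomial of degree < 2k with one that is not divisible by it.\<close>

lemma line_factor_vanishes:
  fixes g h Q A B :: "'a::real_inner \<Rightarrow> real"
  assumes g: "polynomial_on_lines (2 * k - 2) g" and h: "polynomial_on_lines d h"
    and Q: "polynomial_on_lines d Q" and k: "k \<ge> 1"
    and rel: "\<And>x. (x \<bullet> x) ^ k * h x = g x * ((x \<bullet> x) * Q x + (x \<bullet> b) * A x + B x)"
    and inv: "invariant_along b A" "invariant_along b B"
    and b: "norm b = 1" and y: "y \<bullet> b = 0" "y \<noteq> 0"
    and AB: "A y \<noteq> 0 \<or> B y \<noteq> 0"
  shows "g (y + t *\<^sub>R b) = 0"
proof -
  obtain PG where PG: "degree PG \<le> 2 * k - 2" "\<And>t. g (y + t *\<^sub>R b) = poly PG t"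
    using g unfolding polynomial_on_lines_def by blast
  obtain PH where PH: "\<And>t. h (y + t *\<^sub>R b) = poly PH t"
    using h unfolding polynomial_on_lines_def by blast
  obtain PQ where PQ: "\<And>t. Q (y + t *\<^sub>R b) = poly PQ t"
    using Q unfolding polynomial_on_lines_def by blast
  define q where "q = y \<bullet> y"
  have "b \<bullet> b = 1"
    using b by (simp flip: power2_norm_eq_inner)
  then have line: "(y + t *\<^sub>R b) \<bullet> (y + t *\<^sub>R b) = poly [:q, 0, 1:] t" "(y + t *\<^sub>R b) \<bullet> b = t" for t
    using y(1) by (simp_all add: q_def inner_add_left inner_add_right inner_commute algebra_simps)
  have "[:q, 0, 1:] ^ k * PH = PG * ([:q, 0, 1:] * PQ + [:B y, A y:])"
  proof (rule poly_eq_poly_eq_iff[THEN iffD1, OF ext])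
    fix t
    have "poly ([:q, 0, 1:] ^ k * PH) t = (poly [:q, 0, 1:] t) ^ k * h (y + t *\<^sub>R b)"
      by (simp add: PH poly_power)
    also have "\<dots> = g (y + t *\<^sub>R b) * (poly [:q, 0, 1:] t * Q (y + t *\<^sub>R b)
        + t * A (y + t *\<^sub>R b) + B (y + t *\<^sub>R b))"
      using rel[of "y + t *\<^sub>R b"] unfolding line .
    also have "\<dots> = poly (PG * ([:q, 0, 1:] * PQ + [:B y, A y:])) t"
      using inv unfolding invariant_along_def by (simp add: PG PQ algebra_simps)
    finally show "poly ([:q, 0, 1:] ^ k * PH) t = poly (PG * ([:q, 0, 1:] * PQ + [:B y, A y:])) t" .
  qed
  then have "[:q, 0, 1:] ^ k dvd PG * ([:q, 0, 1:] * PQ + [:B y, A y:])"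
    by (metis dvdI)
  moreover have "q > 0" "[:B y, A y:] \<noteq> 0" "degree PG < 2 * k"
    using y AB PG(1) k by (auto simp: q_def)
  ultimately have "PG = 0"
    using quadratic_power_dvd_imp_eq_0 by blast
  then show ?thesis by (simp add: PG)
qed

lemma ex_Basis_neq:
  assumes "DIM('a::euclidean_space) \<ge> 2"
  shows "\<exists>c::'a. c \<in> Basis \<and> c \<noteq> b"
proof (rule ccontr)
  assume "\<not> ?thesis"
  then have "(Basis :: 'a set) \<subseteq> {b}" by blast
  then have "DIM('a) \<le> card {b}" by (rule card_mono[OF finite.insertI[OF finite.emptyI]])
  with assms show False by simp
qed

lemma norm_decomposition_remainder_eq_0:
  fixes g h f Q A B :: "'a::euclidean_space \<Rightarrow> real"
  assumes dim: "DIM('a) \<ge> 2" and b: "b \<in> Basis" and k: "k \<ge> 1"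
    and g: "polynomial_on_lines (2 * k - 2) g" "continuous_on UNIV g" "g x0 \<noteq> 0"
    and h: "polynomial_on_lines k h"
    and dec: "norm_decomposition b k f Q A B"
    and rel: "\<And>x. (x \<bullet> x) ^ k * h x = g x * f x"
  shows "A z = 0 \<and> B z = 0"
proof -
  have hp: "homogeneous_poly (k - 2) Q" "homogeneous_poly (k - 1) A" "homogeneous_poly k B"
    and inv: "invariant_along b A" "invariant_along b B"
    and f: "\<And>x. f x = (x \<bullet> x) * Q x + (x \<bullet> b) * A x + B x"
    using dec unfolding norm_decomposition_def by auto
  have lines: "polynomial_on_lines k Q" "polynomial_on_lines k A" "polynomial_on_lines k B"
    using polynomial_on_lines_mono[OF homogeneous_poly_polynomial_on_lines[OF hp(1)], of k]
      polynomial_on_lines_mono[OF homogeneous_poly_polynomial_on_lines[OF hp(2)], of k]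
      homogeneous_poly_polynomial_on_lines[OF hp(3)] by simp_all
  have rel': "(x \<bullet> x) ^ k * h x = g x * ((x \<bullet> x) * Q x + (x \<bullet> b) * A x + B x)" for x
    using rel f by simp
  have off_axis: "A x * g x = 0 \<and> B x * g x = 0" if x: "x - (x \<bullet> b) *\<^sub>R b \<noteq> 0" for x
  proof -
    define y where "y = x - (x \<bullet> b) *\<^sub>R b"
    have y: "y \<bullet> b = 0" "y \<noteq> 0"
      using b x by (simp_all add: y_def inner_diff_left)
    have "A (y + (x \<bullet> b) *\<^sub>R b) = A y" "B (y + (x \<bullet> b) *\<^sub>R b) = B y"
      using inv unfolding invariant_along_def by blast+
    then have AB: "A x = A y" "B x = B y"
      by (simp_all add: y_def)
    show ?thesis
    proof (cases "A y = 0 \<and> B y = 0")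
      case False
      then have "g (y + (x \<bullet> b) *\<^sub>R b) = 0"
        using line_factor_vanishes[OF g(1) h lines(1) k rel' inv] b y by auto
      then show ?thesis by (simp add: y_def)
    qed (simp add: AB)
  qed
  obtain c where c: "c \<in> Basis" "c \<noteq> b"
    using ex_Basis_neq[OF dim] by blast
  have "c - (c \<bullet> b) *\<^sub>R b \<noteq> 0"
    using b c by (simp add: inner_Basis nonzero_Basis)
  moreover have "open {x. x - (x \<bullet> b) *\<^sub>R b \<noteq> 0}"
    by (intro open_Collect_neq continuous_intros)
  ultimately show ?thesis
    using polynomial_on_lines_mult_eq_0[OF lines(2) g] polynomial_on_lines_mult_eq_0[OF lines(3) g] off_axis
    by blast
qed

lemma parallel_on_sphere_homogeneous:
  fixes F :: "'a::euclidean_space \<Rightarrow> 'b::euclidean_space" and H :: "'a \<Rightarrow> 'b"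
  assumes F: "is_form k F" and H: "is_form (k - 2) H" and k: "k \<ge> 2"
    and par: "\<And>x. x \<in> sphere 0 1 \<Longrightarrow> c *\<^sub>R H x = (H x \<bullet> F x) *\<^sub>R F x"
  shows "(c * (x \<bullet> x) ^ k) *\<^sub>R H x = (H x \<bullet> F x) *\<^sub>R F x"
proof (cases "x = 0")
  case True
  have "F 0 = 0"
    using is_form_scaleR[OF F, of 0 0] k by (simp add: power_0_left)
  with True k show ?thesis by simp
next
  case False
  define n where "n = norm x"
  define u where "u = (1 / n) *\<^sub>R x"
  have u: "u \<in> sphere 0 1" and x: "x = n *\<^sub>R u"
    using False by (simp_all add: n_def u_def)
  then have "u \<bullet> u = 1"
    by (simp flip: power2_norm_eq_inner)
  then have "(c * (x \<bullet> x) ^ k) *\<^sub>R H x = (n ^ k * n ^ k * n ^ (k - 2)) *\<^sub>R (c *\<^sub>R H u)"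
    unfolding x is_form_scaleR[OF H] by (simp add: power2_eq_square power_mult_distrib)
  also have "\<dots> = (n ^ k * n ^ k * n ^ (k - 2)) *\<^sub>R ((H u \<bullet> F u) *\<^sub>R F u)"
    by (simp add: par[OF u])
  also have "\<dots> = (H x \<bullet> F x) *\<^sub>R F x"
    unfolding x is_form_scaleR[OF H] is_form_scaleR[OF F] by (simp add: mult_ac)
  finally show ?thesis .
qed

lemma form_reduces_on_sphere:
  fixes F :: "'a::euclidean_space \<Rightarrow> 'b::euclidean_space" and H :: "'a \<Rightarrow> 'b"
  assumes dim: "DIM('a) \<ge> 2" and k: "k \<ge> 2"
    and F: "is_form k F" and H: "is_form (k - 2) H"
    and par: "\<And>x. x \<in> sphere 0 1 \<Longrightarrow> c *\<^sub>R H x = (H x \<bullet> F x) *\<^sub>R F x"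
    and x0: "H x0 \<bullet> F x0 \<noteq> 0"
  shows "\<exists>G. is_form (k - 2) G \<and> (\<forall>x\<in>sphere 0 1. G x = F x)"
proof -
  obtain b :: 'a where b: "b \<in> Basis"
    using nonempty_Basis by blast
  define g where "g x = H x \<bullet> F x" for x
  have "polynomial_on_lines ((k - 2) + k) g"
    unfolding g_def by (rule polynomial_on_lines_inner_forms[OF H F])
  then have g_lines: "polynomial_on_lines (2 * k - 2) g"
    using k by (simp add: mult_2)
  have g_cont: "continuous_on UNIV g"
    unfolding g_def by (rule continuous_on_inner_forms[OF H F])
  define Q where "Q a = (SOME Q. \<exists>A B. norm_decomposition b k (\<lambda>x. F x \<bullet> a) Q A B)" for a
  have divisible: "F x \<bullet> a = (x \<bullet> x) * Q a x" and Q: "homogeneous_poly (k - 2) (Q a)"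
    if a: "a \<in> Basis" for a x
  proof -
    obtain A B where dec: "norm_decomposition b k (\<lambda>x. F x \<bullet> a) (Q a) A B"
      using someI_ex[OF homogeneous_poly_norm_decomposition[OF b form_component[OF F a]]]
      unfolding Q_def by blast
    have rel: "(x \<bullet> x) ^ k * (c * (H x \<bullet> a)) = g x * (F x \<bullet> a)" for x
      using arg_cong[OF parallel_on_sphere_homogeneous[OF F H k par], of "\<lambda>v. v \<bullet> a"]
      by (simp add: g_def mult_ac)
    have h_lines: "polynomial_on_lines k (\<lambda>x. c * (H x \<bullet> a))"
      using homogeneous_poly_cmult[OF form_component[OF H a]]
      by (rule polynomial_on_lines_mono[OF homogeneous_poly_polynomial_on_lines]) simp
    have "k \<ge> 1" "g x0 \<noteq> 0"
      using x0 k by (simp_all add: g_def)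
    note remainder = norm_decomposition_remainder_eq_0[OF dim b this(1) g_lines g_cont this(2) h_lines dec rel]
    show "F x \<bullet> a = (x \<bullet> x) * Q a x" "homogeneous_poly (k - 2) (Q a)"
      using dec remainder by (simp_all add: norm_decomposition_def)
  qed
  define G where "G x = (\<Sum>a\<in>Basis. Q a x *\<^sub>R a)" for x
  have "is_form (k - 2) G"
    unfolding G_def by (intro is_form_sum_Basis Q)
  moreover have "G x = F x" if "x \<in> sphere 0 1" for x
  proof -
    have "x \<bullet> x = 1"
      using that by (simp flip: power2_norm_eq_inner)
    then have "G x = (\<Sum>a\<in>Basis. (F x \<bullet> a) *\<^sub>R a)"
      unfolding G_def by (intro sum.cong refl) (simp add: divisible)
    then show ?thesis by (simp add: euclidean_representation)
  qed
  ultimately show ?thesis by blast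
qed

section \<open>Harmonic forms of minimal degree\<close>

lemma tension_field_eq_0_imp_parallel:
  assumes "tension_field f x = 0"
  shows "(f x \<bullet> f x) *\<^sub>R sphere_laplacian f x = (sphere_laplacian f x \<bullet> f x) *\<^sub>R f x"
proof (cases "f x = 0")
  case False
  have "sphere_laplacian f x = ((sphere_laplacian f x \<bullet> f x) / (f x \<bullet> f x)) *\<^sub>R f x"
    using assms unfolding tension_field_def Let_def by simp
  then have "(f x \<bullet> f x) *\<^sub>R sphere_laplacian f x
      = (f x \<bullet> f x) *\<^sub>R (((sphere_laplacian f x \<bullet> f x) / (f x \<bullet> f x)) *\<^sub>R f x)"
    by (rule arg_cong)
  with False show ?thesis by simp
qed simp

lemma harmonic_minimal_form_laplacian_eq_0:
  fixes F :: "'a::euclidean_space \<Rightarrow> 'b::euclidean_space" and H :: "'a \<Rightarrow> 'b"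
  assumes dim: "DIM('a) \<ge> 2" and r: "r > 0"
    and minimal: "minimal_degree_form k F" and harmonic: "harmonic_sphere_map r F"
    and H: "is_form (k - 2) H" "k \<le> 1 \<Longrightarrow> H = (\<lambda>_. 0)"
    and laplacian: "\<And>x. x \<in> sphere 0 1 \<Longrightarrow> sphere_laplacian F x = H x - ev *\<^sub>R F x"
    and x: "x \<in> sphere 0 1"
  shows "H x = 0"
proof -
  have norm_F: "F y \<bullet> F y = r\<^sup>2" if "y \<in> sphere 0 1" for y
    using harmonic that unfolding harmonic_sphere_map_def by (simp flip: power2_norm_eq_inner)
  have par: "r\<^sup>2 *\<^sub>R H y = (H y \<bullet> F y) *\<^sub>R F y" if y: "y \<in> sphere 0 1" for y
  proof -
    have "tension_field F y = 0"
      using harmonic y unfolding harmonic_sphere_map_def by blast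
    from tension_field_eq_0_imp_parallel[OF this]
    show ?thesis
      by (simp add: laplacian[OF y] norm_F[OF y] inner_diff_left algebra_simps)
  qed
  show ?thesis
  proof (cases "k \<le> 1")
    case True
    then show ?thesis using H(2) by simp
  next
    case False
    then have k: "k \<ge> 2" by simp
    have F: "is_form k F"
      using minimal unfolding minimal_degree_form_def by blast
    have "H y \<bullet> F y = 0" for y
    proof (rule ccontr)
      assume "H y \<bullet> F y \<noteq> 0"
      then obtain G where "is_form (k - 2) G" "\<forall>x\<in>sphere 0 1. G x = F x"
        using form_reduces_on_sphere[OF dim k F H(1) par] by blast
      moreover have "k - 2 < k" using k by simp
      ultimately show False
        using minimal unfolding minimal_degree_form_def by blast
    qed
    with par[OF x] r show ?thesis by simp
  qed
qed

lemma harmonic_minimal_form_eigenmap: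
  fixes F :: "'a::euclidean_space \<Rightarrow> 'b::euclidean_space"
  assumes "DIM('a) \<ge> 2" "r > 0" "minimal_degree_form k F" "harmonic_sphere_map r F"
    and x: "x \<in> sphere 0 1"
  shows "sphere_laplacian F x = - (real k * (real k + real DIM('a) - 2)) *\<^sub>R F x"
proof -
  have "is_form k F"
    using assms(3) unfolding minimal_degree_form_def by blast
  then obtain H where H: "is_form (k - 2) H" "k \<le> 1 \<Longrightarrow> H = (\<lambda>_. 0)"
    "\<And>x. x \<in> sphere 0 1 \<Longrightarrow>
      sphere_laplacian F x = H x - (real k * (real k + real DIM('a) - 2)) *\<^sub>R F x"
    using sphere_laplacian_form by blast
  with harmonic_minimal_form_laplacian_eq_0[OF assms(1-4) H x] show ?thesis
    by (simp add: H(3)[OF x])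
qed

section \<open>The product map\<close>

lemma tension_field_Pair:
  assumes L: "sphere_laplacian (\<lambda>y. (F1 y, F2 y)) x = (- l1 *\<^sub>R F1 x, - l2 *\<^sub>R F2 x)"
    and norm: "norm (F1 x) = r1" "norm (F2 x) = r2" and r: "r1\<^sup>2 + r2\<^sup>2 = 1"
  shows "tension_field (\<lambda>y. (F1 y, F2 y)) x = (((l2 - l1) * r2\<^sup>2) *\<^sub>R F1 x, ((l1 - l2) * r1\<^sup>2) *\<^sub>R F2 x)"
proof -
  define c where "c = l1 * r1\<^sup>2 + l2 * r2\<^sup>2"
  have "F1 x \<bullet> F1 x = r1\<^sup>2" "F2 x \<bullet> F2 x = r2\<^sup>2"
    using norm by (simp_all flip: power2_norm_eq_inner)
  then have "(F1 x, F2 x) \<bullet> (F1 x, F2 x) = 1" "(- l1 *\<^sub>R F1 x, - l2 *\<^sub>R F2 x) \<bullet> (F1 x, F2 x) = - c"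
    using r by (simp_all add: c_def)
  then have "tension_field (\<lambda>y. (F1 y, F2 y)) x = ((c - l1) *\<^sub>R F1 x, (c - l2) *\<^sub>R F2 x)"
    unfolding tension_field_def Let_def L by (simp add: algebra_simps)
  moreover have "c - l1 = l1 * (r1\<^sup>2 + r2\<^sup>2 - 1) + (l2 - l1) * r2\<^sup>2"
    "c - l2 = l2 * (r1\<^sup>2 + r2\<^sup>2 - 1) + (l1 - l2) * r1\<^sup>2"
    unfolding c_def by (simp_all add: algebra_simps)
  ultimately show ?thesis using r by simp
qed

lemma harmonic_sphere_map_Pair_iff:
  fixes F1 :: "'a::euclidean_space \<Rightarrow> 'b::euclidean_space" and F2 :: "'a \<Rightarrow> 'c::euclidean_space"
  assumes r: "r1 > 0" "r2 > 0" "r1\<^sup>2 + r2\<^sup>2 = 1"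
    and norm: "\<And>x. x \<in> sphere 0 1 \<Longrightarrow> norm (F1 x) = r1" "\<And>x. x \<in> sphere 0 1 \<Longrightarrow> norm (F2 x) = r2"
    and laplacian: "\<And>x. x \<in> sphere 0 1 \<Longrightarrow>
      sphere_laplacian (\<lambda>y. (F1 y, F2 y)) x = (- l1 *\<^sub>R F1 x, - l2 *\<^sub>R F2 x)"
  shows "harmonic_sphere_map 1 (\<lambda>x. (F1 x, F2 x)) \<longleftrightarrow> l1 = l2"
proof -
  have tension: "tension_field (\<lambda>y. (F1 y, F2 y)) x = 0 \<longleftrightarrow> l1 = l2" if x: "x \<in> sphere 0 1" for x
    using tension_field_Pair[OF laplacian[OF x] norm(1)[OF x] norm(2)[OF x] r(3)] norm[OF x] r(1,2)
    by (auto simp: zero_prod_def)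
  have "(F1 x, F2 x) \<in> sphere 0 1" if x: "x \<in> sphere 0 1" for x
    using norm[OF x] r(3) by (simp add: norm_Pair)
  moreover obtain b :: 'a where "b \<in> Basis"
    using nonempty_Basis by blast
  then have "b \<in> sphere 0 1" by simp
  ultimately show ?thesis
    unfolding harmonic_sphere_map_def using tension by blast
qed

lemma sphere_eigenvalue_inj:
  assumes "k1 \<ge> 1" "k2 \<ge> 1" "n \<ge> 1"
    and "real k1 * (real k1 + real n - 2) = real k2 * (real k2 + real n - 2)"
  shows "k1 = k2"
proof -
  have "(real k1 - real k2) * (real k1 + real k2 + real n - 2) = 0"
    using assms(4) by (simp add: algebra_simps)
  moreover have "real k1 + real k2 + real n - 2 > 0"
    using assms(1-3) by simp
  ultimately show ?thesis by simp
qed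

theorem mainTheorem5:
  fixes F1 :: "'a::euclidean_space \<Rightarrow> 'b::euclidean_space"
    and F2 :: "'a \<Rightarrow> 'c::euclidean_space"
    and k1 k2 :: nat and r1 r2 :: real
  assumes "DIM('a) \<ge> 2"
    and "k1 \<ge> 1" and "k2 \<ge> 1"
    and "r1 > 0" and "r2 > 0" and "r1\<^sup>2 + r2\<^sup>2 = 1"
    and "is_form k1 F1" and "is_form k2 F2"
    and "\<forall>x. (norm (F1 x))\<^sup>2 = r1\<^sup>2 * norm x ^ (2 * k1)"
    and "\<forall>x. (norm (F2 x))\<^sup>2 = r2\<^sup>2 * norm x ^ (2 * k2)"
    and "minimal_degree_form k1 F1" and "minimal_degree_form k2 F2"
    and "harmonic_sphere_map r1 F1" and "harmonic_sphere_map r2 F2"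
  shows "harmonic_sphere_map 1 (\<lambda>x. (F1 x, F2 x)) \<longleftrightarrow> k1 = k2"
proof -
  let ?ev = "\<lambda>k. real k * (real k + real DIM('a) - 2)"
  have "norm (F1 x) = r1" "norm (F2 x) = r2" if "x \<in> sphere 0 1" for x
    using assms(4,5,13,14) that unfolding harmonic_sphere_map_def by auto
  moreover have "sphere_laplacian (\<lambda>y. (F1 y, F2 y)) x = (- ?ev k1 *\<^sub>R F1 x, - ?ev k2 *\<^sub>R F2 x)"
    if x: "x \<in> sphere 0 1" for x
    using sphere_laplacian_Pair[OF form_has_second_vector_derivative_at_0[OF assms(7)]
        form_has_second_vector_derivative_at_0[OF assms(8)]]
      harmonic_minimal_form_eigenmap[OF assms(1,4,11,13) x]
      harmonic_minimal_form_eigenmap[OF assms(1,5,12,14) x]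
    by simp
  ultimately have "harmonic_sphere_map 1 (\<lambda>x. (F1 x, F2 x)) \<longleftrightarrow> ?ev k1 = ?ev k2"
    by (rule harmonic_sphere_map_Pair_iff[OF assms(4-6)])
  also have "\<dots> \<longleftrightarrow> k1 = k2"
    using sphere_eigenvalue_inj[OF assms(2,3), of "DIM('a)"] assms(1) by auto
  finally show ?thesis .
qed

end
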